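(* For every $k\ge1$ and every $T\in\mathcal{GT}_k(n)$, the word $\omega(T)\in\mathrm{ACol}(C_n)^*$ is of highest weight, i.e. no Kashiwara operator $e_i$ ($1\le i\le n$) is defined on $\omega(T)$.
   Context: Type $C$ setting: $C_n=\{1<\cdots<n<\overline n<\cdots<\overline1\}$ with crystal graph $1\xrightarrow{1}2\xrightarrow{2}\cdots\xrightarrow{n-1}n\xrightarrow{n}\overline n\xrightarrow{n-1}\cdots\xrightarrow{1}\overline1$, and Kashiwara operators $e_i,f_i$ acting on $C_n^*$ by the tensor product rule. A column is a strictly increasing word; $N_z(u)$ counts letters $x\le z$ or $x\ge\overline z$; a column is admissible if nonempty with $N_z(u)\le z$ for all $z$. $\mathrm{ACol}(C_n)$ is the set of admissible columns plus a symbol $\epsilon$; $p:\mathrm{ACol}(C_n)^*\to C_n^*$ erases $\epsilon$ and sends a column to itself. $e_iw$ is defined for $w\in\mathrm{ACol}(C_n)^*$ iff $e_ip(w)$ is defined (and then it modifies the corresponding column). Blocks: $\mathfrak{c}(m)=12\cdots m$; $\mathfrak{c}(a,b)=(a+1)\cdots(a+b)$; $\mathfrak{c}(\overline a,c)=\overline a\,\overline{a-1}\cdots\overline{a-c+1}$ (empty when $b=0$ resp. $c=0$). $C$-trees: vertices are $i$ ($i\ge1$), $im$ and $im^-$ ($i,m\ge1$); levels: $i$ has level $i$, $im,im^-$ have level $i+m$; strand $i$ is ordered $i<i1<i1^-<i2<i2^-<\cdots$. A labelling of rank $k$ is $s$ from vertices of level $\le k$ to $\mathbb N$, with valuation $q(v)=s(i)+\sum_{im\le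 v}s(im)-\sum_{im^-\le v}s(im^-)$ for $v$ on strand $i$; it is an $n$-labelling if $0\le q(v)\le n$ for all such $v$. $\rho(i)=\mathfrak{c}(s(i))$; $\rho(im)=\mathfrak{c}(q(v'),s(im))$ with $v'$ the predecessor of $im$ on its strand; $\rho(im^-)=\mathfrak{c}(\overline{q(im)},s(im^-))$. Level reading: $\omega_t=\rho(t)\rho((t-1)1)\cdots\rho(1(t-1))\rho(1(t-1)^-)\rho(2(t-2)^-)\cdots\rho((t-1)1^-)$, or the letter $\epsilon$ if empty. $\mathcal{GT}_k(n)$ is the set of $n$-labellings of rank $k$ for which each $\omega_t$ ($1\le t\le k$) is $\epsilon$ or an admissible column; $\omega(T)=\omega_1\cdots\omega_k$. *)

theory Defs
  imports Main
begin

text \<open>U i stands for the letter i, B i for the barred letter \<open>\<overline>i\<close>.\<close>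
datatype letter = U nat | B nat

definition valid_letter :: "nat \<Rightarrow> letter \<Rightarrow> bool" where
  "valid_letter n x = (case x of U a \<Rightarrow> 1 \<le> a \<and> a \<le> n | B a \<Rightarrow> 1 \<le> a \<and> a \<le> n)"

text \<open>Position of a letter in the total order 1 < ... < n < \<overline>n < ... < \<overline>1.\<close>
definition pos :: "nat \<Rightarrow> letter \<Rightarrow> nat" where
  "pos n x = (case x of U a \<Rightarrow> a | B a \<Rightarrow> 2 * n + 1 - a)"

definition letter_less :: "nat \<Rightarrow> letter \<Rightarrow> letter \<Rightarrow> bool" where
  "letter_less n x y = (pos n x < pos n y)"

text \<open>e_i on single letters (partial): inverse of the arrows
  i -> i+1, \<overline>(i+1) -> \<overline>i (label i < n), n -> \<overline>n (label n).\<close>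
definition e_letter :: "nat \<Rightarrow> nat \<Rightarrow> letter \<Rightarrow> letter option" where
  "e_letter n i x =
     (if 1 \<le> i \<and> i < n then
        (case x of U a \<Rightarrow> (if a = i + 1 then Some (U i) else None)
                 | B a \<Rightarrow> (if a = i then Some (B (i + 1)) else None))
      else if i = n \<and> 1 \<le> n then
        (case x of U a \<Rightarrow> None | B a \<Rightarrow> (if a = n then Some (U n) else None))
      else None)"

definition f_letter :: "nat \<Rightarrow> nat \<Rightarrow> letter \<Rightarrow> letter option" where
  "f_letter n i x =
     (if 1 \<le> i \<and> i < n then
        (case x of U a \<Rightarrow> (if a = i then Some (U (i + 1)) else None)
                 | B a \<Rightarrow> (if a = i + 1 then Some (B i) else None))
      else if i = n \<and> 1 \<le> n then
        (case x of U a \<Rightarrow> (if a = n then Some (B n) else None) | B a \<Rightarrow> None)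
      else None)"

text \<open>Tensor product (signature) rule, Kashiwara convention: a letter on which
  f_i acts gives +, one on which e_i acts gives -, and adjacent pairs "+ -" are
  cancelled recursively.  The function below returns the positions of the
  uncancelled "-" (c counts the currently unmatched "+", j is the position).\<close>
fun unmatched_minus :: "nat \<Rightarrow> nat \<Rightarrow> nat \<Rightarrow> nat \<Rightarrow> letter list \<Rightarrow> nat list" where
  "unmatched_minus n i c j [] = []"
| "unmatched_minus n i c j (x # xs) =
     (if e_letter n i x \<noteq> None then
        (if 0 < c then unmatched_minus n i (c - 1) (Suc j) xs
         else j # unmatched_minus n i c (Suc j) xs)
      else if f_letter n i x \<noteq> None then unmatched_minus n i (Suc c) (Suc j) xs
      else unmatched_minus n i c (Suc j) xs)"

text \<open>e_i on words: acts on the rightmost uncancelled "-", undefined (None) if there is none.\<close>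
definition e_word :: "nat \<Rightarrow> nat \<Rightarrow> letter list \<Rightarrow> letter list option" where
  "e_word n i w =
     (let js = unmatched_minus n i 0 0 w in
      if js = [] then None
      else Some (w[last js := the (e_letter n i (w ! last js))]))"

definition is_column :: "nat \<Rightarrow> letter list \<Rightarrow> bool" where
  "is_column n u = ((\<forall>x\<in>set u. valid_letter n x) \<and> sorted_wrt (letter_less n) u)"

text \<open>N_z(u): number of letters x with x \<le> z or x \<ge> \<overline>z.\<close>
definition Ncount :: "nat \<Rightarrow> letter list \<Rightarrow> nat" where
  "Ncount z u = length (filter (\<lambda>x. case x of U a \<Rightarrow> a \<le> z | B a \<Rightarrow> a \<le> z) u)"

definition admissible_column :: "nat \<Rightarrow> letter list \<Rightarrow> bool" where
  "admissible_column n u = (is_column n u \<and> u \<noteq> [] \<and> (\<forall>z\<in>{1..n}. Ncount z u \<le> z))"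

text \<open>Elements of ACol(C_n): the symbol \<epsilon> or an (admissible) column.\<close>
datatype acol = Eps | Col "letter list"

definition p_acol :: "acol list \<Rightarrow> letter list" where
  "p_acol w = concat (map (\<lambda>c. case c of Eps \<Rightarrow> [] | Col u \<Rightarrow> u) w)"

text \<open>e_i w is defined for w in ACol(C_n)^* iff e_i p(w) is defined.\<close>
definition e_defined_acol :: "nat \<Rightarrow> nat \<Rightarrow> acol list \<Rightarrow> bool" where
  "e_defined_acol n i w = (e_word n i (p_acol w) \<noteq> None)"

definition blk :: "nat \<Rightarrow> letter list" where
  "blk m = map U [1..<m + 1]"

definition blk2 :: "nat \<Rightarrow> nat \<Rightarrow> letter list" where
  "blk2 a b = map U [a + 1..<a + b + 1]"

definition blkbar :: "nat \<Rightarrow> nat \<Rightarrow> letter list" where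
  "blkbar a c = map (\<lambda>j. B (a - j)) [0..<c]"

text \<open>Vertices: Root i = i, Plus i m = im, Minus i m = im^- (with i, m \<ge> 1).\<close>
datatype vtx = Root nat | Plus nat nat | Minus nat nat

definition is_vertex :: "vtx \<Rightarrow> bool" where
  "is_vertex v = (case v of Root i \<Rightarrow> 1 \<le> i
                          | Plus i m \<Rightarrow> 1 \<le> i \<and> 1 \<le> m
                          | Minus i m \<Rightarrow> 1 \<le> i \<and> 1 \<le> m)"

definition level :: "vtx \<Rightarrow> nat" where
  "level v = (case v of Root i \<Rightarrow> i | Plus i m \<Rightarrow> i + m | Minus i m \<Rightarrow> i + m)"

text \<open>A labelling of rank k is given by a function s; only its values at vertices
  of level \<le> k are used.  Valuation q (strand order i < i1 < i1^- < i2 < ...).\<close>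
definition qval :: "(vtx \<Rightarrow> nat) \<Rightarrow> vtx \<Rightarrow> int" where
  "qval s v = (case v of
      Root i \<Rightarrow> int (s (Root i))
    | Plus i m \<Rightarrow> int (s (Root i)) + (\<Sum>m'\<in>{1..m}. int (s (Plus i m')))
                                    - (\<Sum>m'\<in>{1..<m}. int (s (Minus i m')))
    | Minus i m \<Rightarrow> int (s (Root i)) + (\<Sum>m'\<in>{1..m}. int (s (Plus i m')))
                                     - (\<Sum>m'\<in>{1..m}. int (s (Minus i m'))))"

definition n_labelling :: "nat \<Rightarrow> nat \<Rightarrow> (vtx \<Rightarrow> nat) \<Rightarrow> bool" where
  "n_labelling n k s = (\<forall>v. is_vertex v \<and> level v \<le> k \<longrightarrow> 0 \<le> qval s v \<and> qval s v \<le> int n)"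

definition pred_plus :: "nat \<Rightarrow> nat \<Rightarrow> vtx" where
  "pred_plus i m = (if m = 1 then Root i else Minus i (m - 1))"

definition rho :: "(vtx \<Rightarrow> nat) \<Rightarrow> vtx \<Rightarrow> letter list" where
  "rho s v = (case v of
      Root i \<Rightarrow> blk (s (Root i))
    | Plus i m \<Rightarrow> blk2 (nat (qval s (pred_plus i m))) (s (Plus i m))
    | Minus i m \<Rightarrow> blkbar (nat (qval s (Plus i m))) (s (Minus i m)))"

definition level_word :: "(vtx \<Rightarrow> nat) \<Rightarrow> nat \<Rightarrow> letter list" where
  "level_word s t =
     rho s (Root t)
     @ concat (map (\<lambda>j. rho s (Plus j (t - j))) (rev [1..<t]))
     @ concat (map (\<lambda>j. rho s (Minus j (t - j))) [1..<t])"

definition omega_t :: "(vtx \<Rightarrow> nat) \<Rightarrow> nat \<Rightarrow> acol" where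
  "omega_t s t = (if level_word s t = [] then Eps else Col (level_word s t))"

definition GT :: "nat \<Rightarrow> nat \<Rightarrow> (vtx \<Rightarrow> nat) set" where
  "GT k n = {s. n_labelling n k s \<and>
                (\<forall>t\<in>{1..k}. level_word s t = [] \<or> admissible_column n (level_word s t))}"

definition omega :: "nat \<Rightarrow> (vtx \<Rightarrow> nat) \<Rightarrow> acol list" where
  "omega k s = map (omega_t s) [1..<k + 1]"

end

theory Submission
  imports Defs "HOL-Library.Multiset"
begin

text \<open>Think of the strands of a C-tree as particles on the heights 0, \<dots>, n: reading the letter i
  moves a particle from height i - 1 to i, reading \<open>\<overline>i\<close> moves one from i to i - 1.
  Reading the levels of an n-labelling in order, strand j starts at height 0, and ends level t at
  the valuation of its last vertex of level \<le> t; the valuations stay in [0, n], so every letter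
  is read while a particle sits at its source.  The letters on which e_i acts are exactly those
  with source i, those on which f_i acts exactly those with target i.  Hence along any prefix the
  number of uncancelled "-" for e_i never exceeds the number of particles initially at height i,
  which is 0: the reading word has no uncancelled "-", i.e. it is of highest weight.\<close>

lemma upt_split_at: "i \<le> t \<Longrightarrow> t < j \<Longrightarrow> [i..<j] = [i..<t] @ t # [Suc t..<j]"
  using upt_add_eq_append[of i t "j - t"] by (simp add: upt_conv_Cons)

fun letter_source :: "letter \<Rightarrow> nat" where
  "letter_source (U a) = a - 1"
| "letter_source (B a) = a"

fun letter_target :: "letter \<Rightarrow> nat" where
  "letter_target (U a) = a"
| "letter_target (B a) = a - 1"

inductive strand_walk :: "nat \<Rightarrow> nat multiset \<Rightarrow> letter list \<Rightarrow> nat multiset \<Rightarrow> bool" for n where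
  Nil: "strand_walk n R [] R"
| Cons: "valid_letter n x \<Longrightarrow> letter_source x \<in># R \<Longrightarrow>
    strand_walk n (add_mset (letter_target x) (R - {#letter_source x#})) w R' \<Longrightarrow>
    strand_walk n R (x # w) R'"

lemma e_letter_iff_letter_source:
  assumes "valid_letter n x" "1 \<le> i" "i \<le> n"
  shows "e_letter n i x \<noteq> None \<longleftrightarrow> letter_source x = i"
  using assms by (cases x) (auto simp: e_letter_def valid_letter_def)

lemma f_letter_iff_letter_target:
  assumes "valid_letter n x" "1 \<le> i" "i \<le> n"
  shows "f_letter n i x \<noteq> None \<longleftrightarrow> letter_target x = i"
  using assms by (cases x) (auto simp: f_letter_def valid_letter_def)

lemma letter_source_neq_target: "valid_letter n x \<Longrightarrow> letter_source x \<noteq> letter_target x"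
  by (cases x) (auto simp: valid_letter_def)

lemma unmatched_minus_Nil_if_strand_walk:
  assumes "strand_walk n R w R'" "1 \<le> i" "i \<le> n" "count R i \<le> c"
  shows "unmatched_minus n i c j w = []"
  using assms
proof (induction arbitrary: c j rule: strand_walk.induct)
  case (Nil R)
  then show ?case by simp
next
  case (Cons x R w R')
  let ?R = "add_mset (letter_target x) (R - {#letter_source x#})"
  have count_step: "count ?R i = count R i - (if letter_source x = i then 1 else 0)
                                          + (if letter_target x = i then 1 else 0)"
    using Cons.hyps(2) by (auto simp: in_diff_count)
  have e_iff: "e_letter n i x \<noteq> None \<longleftrightarrow> letter_source x = i"
    and f_iff: "f_letter n i x \<noteq> None \<longleftrightarrow> letter_target x = i"
    by (rule e_letter_iff_letter_source[OF Cons.hyps(1) Cons.prems(1,2)],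
        rule f_letter_iff_letter_target[OF Cons.hyps(1) Cons.prems(1,2)])
  have distinct: "letter_source x \<noteq> letter_target x"
    using Cons.hyps(1) by (rule letter_source_neq_target)
  consider (e) "letter_source x = i" | (f) "letter_target x = i"
    | (neither) "letter_source x \<noteq> i" "letter_target x \<noteq> i"
    by blast
  then show ?case
  proof cases
    case e
    have "0 < count R i"
      using Cons.hyps(2) e by simp
    then have "0 < c"
      using Cons.prems(3) by linarith
    moreover have "count ?R i \<le> c - 1"
      using e Cons.prems(3) count_step distinct by auto
    ultimately show ?thesis
      using e e_iff Cons.IH[OF Cons.prems(1,2)] by simp
  next
    case f
    then have "count ?R i \<le> Suc c"
      using Cons.prems(3) count_step distinct by auto
    then show ?thesis
      using f e_iff f_iff distinct Cons.IH[OF Cons.prems(1,2)] by simp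
  next
    case neither
    then have "count ?R i \<le> c"
      using Cons.prems(3) count_step by auto
    then show ?thesis
      using neither e_iff f_iff Cons.IH[OF Cons.prems(1,2)] by simp
  qed
qed

lemma strand_walk_single: "valid_letter n x \<Longrightarrow> strand_walk n {#letter_source x#} [x] {#letter_target x#}"
  by (rule strand_walk.Cons) (auto intro: strand_walk.Nil)

lemma strand_walk_append:
  "strand_walk n R u R1 \<Longrightarrow> strand_walk n R1 v R2 \<Longrightarrow> strand_walk n R (u @ v) R2"
  by (induction rule: strand_walk.induct) (auto intro: strand_walk.intros)

lemma strand_walk_frame: "strand_walk n R w R' \<Longrightarrow> strand_walk n (R + M) w (R' + M)"
proof (induction rule: strand_walk.induct)
  case (Nil R)
  then show ?case by (rule strand_walk.Nil)
next
  case (Cons x R w R')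
  then show ?case
    by (intro strand_walk.Cons) (auto simp: diff_union_single_conv[symmetric] ac_simps)
qed

lemma strand_walk_concat:
  assumes "\<And>j. j \<in> set js \<Longrightarrow> strand_walk n {#f j#} (seg j) {#g j#}"
  shows "strand_walk n (M + mset (map f js)) (concat (map seg js)) (M + mset (map g js))"
  using assms
proof (induction js arbitrary: M)
  case Nil
  then show ?case by (simp add: strand_walk.Nil)
next
  case (Cons x js)
  have "strand_walk n ({#f x#} + (M + mset (map f js))) (seg x) ({#g x#} + (M + mset (map f js)))"
    using Cons.prems by (intro strand_walk_frame) simp
  moreover have "strand_walk n (M + {#g x#} + mset (map f js)) (concat (map seg js))
                               (M + {#g x#} + mset (map g js))"
    using Cons.IH[of "M + {#g x#}"] Cons.prems by simp
  ultimately show ?case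
    by (auto simp: ac_simps dest: strand_walk_append)
qed

lemma strand_walk_blk2: "p + b \<le> n \<Longrightarrow> strand_walk n {#p#} (blk2 p b) {#p + b#}"
proof (induction b)
  case 0
  then show ?case by (simp add: blk2_def strand_walk.Nil)
next
  case (Suc b)
  have "blk2 p (Suc b) = blk2 p b @ [U (Suc (p + b))]"
    by (simp add: blk2_def)
  moreover have "strand_walk n {#p + b#} [U (Suc (p + b))] {#p + Suc b#}"
    using Suc.prems strand_walk_single[of n "U (Suc (p + b))"] by (simp add: valid_letter_def)
  ultimately show ?case
    using Suc by (simp add: strand_walk_append)
qed

lemma strand_walk_blkbar: "c \<le> Q \<Longrightarrow> Q \<le> n \<Longrightarrow> strand_walk n {#Q#} (blkbar Q c) {#Q - c#}"
proof (induction c)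
  case 0
  then show ?case by (simp add: blkbar_def strand_walk.Nil)
next
  case (Suc c)
  have "valid_letter n (B (Q - c))"
    using Suc.prems by (auto simp: valid_letter_def)
  then have "strand_walk n {#Q - c#} [B (Q - c)] {#Q - Suc c#}"
    using strand_walk_single by fastforce
  moreover have "blkbar Q (Suc c) = blkbar Q c @ [B (Q - c)]"
    by (simp add: blkbar_def)
  ultimately show ?case
    using Suc by (simp add: strand_walk_append)
qed

lemma qval_Plus: "1 \<le> m \<Longrightarrow> qval s (Plus i m) = qval s (pred_plus i m) + int (s (Plus i m))"
  by (cases m) (auto simp: qval_def pred_plus_def atLeastLessThanSuc_atLeastAtMost)

lemma qval_Minus: "1 \<le> m \<Longrightarrow> qval s (Minus i m) = qval s (Plus i m) - int (s (Minus i m))"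
  by (cases m) (auto simp: qval_def atLeastLessThanSuc_atLeastAtMost)

lemma n_labellingD:
  assumes "n_labelling n k s" "is_vertex v" "level v \<le> k"
  shows "0 \<le> qval s v" "qval s v \<le> int n"
  using assms by (auto simp: n_labelling_def)

lemma strand_walk_rho_Root:
  assumes "n_labelling n k s" "1 \<le> i" "i \<le> k"
  shows "strand_walk n {#0#} (rho s (Root i)) {#s (Root i)#}"
proof -
  have "s (Root i) \<le> n"
    using n_labellingD(2)[OF assms(1), of "Root i"] assms
    by (simp add: qval_def is_vertex_def level_def)
  then show ?thesis
    using strand_walk_blk2[of 0 "s (Root i)" n] by (simp add: rho_def blk_def blk2_def)
qed

lemma strand_walk_rho_Plus:
  assumes "n_labelling n k s" "1 \<le> i" "1 \<le> m" "i + m \<le> k"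
  shows "strand_walk n {#nat (qval s (pred_plus i m))#} (rho s (Plus i m)) {#nat (qval s (Plus i m))#}"
proof -
  have "0 \<le> qval s (pred_plus i m)"
    using assms by (intro n_labellingD(1)[OF assms(1)])
      (auto simp: pred_plus_def is_vertex_def level_def)
  moreover have "qval s (Plus i m) \<le> int n"
    using assms by (intro n_labellingD(2)[OF assms(1)]) (auto simp: is_vertex_def level_def)
  ultimately have "nat (qval s (Plus i m)) = nat (qval s (pred_plus i m)) + s (Plus i m)"
      and "nat (qval s (Plus i m)) \<le> n"
    using qval_Plus[OF assms(3), of s i] by auto
  then show ?thesis
    using strand_walk_blk2[of "nat (qval s (pred_plus i m))" "s (Plus i m)" n]
    by (simp add: rho_def)
qed

lemma strand_walk_rho_Minus:
  assumes "n_labelling n k s" "1 \<le> i" "1 \<le> m" "i + m \<le> k"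
  shows "strand_walk n {#nat (qval s (Plus i m))#} (rho s (Minus i m)) {#nat (qval s (Minus i m))#}"
proof -
  have "0 \<le> qval s (Minus i m)" and "qval s (Plus i m) \<le> int n"
    using assms n_labellingD[OF assms(1)] by (auto simp: is_vertex_def level_def)
  then have "s (Minus i m) \<le> nat (qval s (Plus i m))" and "nat (qval s (Plus i m)) \<le> n"
      and "nat (qval s (Minus i m)) = nat (qval s (Plus i m)) - s (Minus i m)"
    using qval_Minus[OF assms(3), of s i] by auto
  then show ?thesis
    using strand_walk_blkbar by (simp add: rho_def)
qed

definition strand_height :: "(vtx \<Rightarrow> nat) \<Rightarrow> nat \<Rightarrow> nat \<Rightarrow> nat" where
  "strand_height s L j =
     (if L < j then 0 else nat (qval s (if L = j then Root j else Minus j (L - j))))"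

definition strand_state :: "(vtx \<Rightarrow> nat) \<Rightarrow> nat \<Rightarrow> nat \<Rightarrow> nat multiset" where
  "strand_state s k L = mset (map (strand_height s L) [1..<k + 1])"

lemma strand_height_pred_level: "j < t \<Longrightarrow> strand_height s (t - 1) j = nat (qval s (pred_plus j (t - j)))"
  by (auto simp: strand_height_def pred_plus_def)

lemma strand_state_split:
  assumes "1 \<le> t" "t \<le> k" "L \<le> t"
  shows "strand_state s k L = mset (map (strand_height s L) [1..<t])
           + {#strand_height s L t#} + replicate_mset (k - t) 0"
proof -
  have split: "[1..<k + 1] = [1..<t] @ t # [Suc t..<k + 1]"
    using assms by (intro upt_split_at) auto
  have "map (strand_height s L) [Suc t..<k + 1] = map (\<lambda>_. 0) [Suc t..<k + 1]"
    using assms by (intro map_cong) (auto simp: strand_height_def)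
  then have "map (strand_height s L) [Suc t..<k + 1] = replicate (k - t) 0"
    by (simp add: map_replicate_const del: upt_Suc)
  then show ?thesis
    unfolding strand_state_def split by simp
qed

lemma strand_walk_level_word:
  assumes "n_labelling n k s" "1 \<le> t" "t \<le> k"
  shows "strand_walk n (strand_state s k (t - 1)) (level_word s t) (strand_state s k t)"
proof -
  define lo where "lo j = nat (qval s (pred_plus j (t - j)))" for j
  define mid where "mid j = nat (qval s (Plus j (t - j)))" for j
  define hi where "hi j = nat (qval s (Minus j (t - j)))" for j
  define Z where "Z = replicate_mset (k - t) (0::nat)"
  have "strand_state s k (t - 1)
          = mset (map (strand_height s (t - 1)) [1..<t]) + {#strand_height s (t - 1) t#} + Z"
    unfolding Z_def using assms(2,3) by (intro strand_state_split) auto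
  also have "map (strand_height s (t - 1)) [1..<t] = map lo [1..<t]"
    unfolding lo_def using strand_height_pred_level[of _ t s] by (intro map_cong) auto
  also have "strand_height s (t - 1) t = 0"
    using assms(2) by (simp add: strand_height_def)
  finally have before: "strand_state s k (t - 1) = {#0#} + mset (map lo [1..<t]) + Z"
    by (simp add: ac_simps)
  have "strand_state s k t
          = mset (map (strand_height s t) [1..<t]) + {#strand_height s t t#} + Z"
    unfolding Z_def using assms(2,3) by (intro strand_state_split) auto
  also have "map (strand_height s t) [1..<t] = map hi [1..<t]"
    by (intro map_cong) (auto simp: hi_def strand_height_def)
  also have "strand_height s t t = s (Root t)"
    by (simp add: strand_height_def qval_def)
  finally have after: "strand_state s k t = {#s (Root t)#} + mset (map hi [1..<t]) + Z"
    by (simp add: ac_simps)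
  have root: "strand_walk n ({#0#} + mset (map lo [1..<t]) + Z) (rho s (Root t))
                             ({#s (Root t)#} + Z + mset (map lo [1..<t]))"
    using strand_walk_frame[OF strand_walk_rho_Root[OF assms], of "mset (map lo [1..<t]) + Z"]
    by (simp add: ac_simps)
  have "strand_walk n ({#s (Root t)#} + Z + mset (map lo (rev [1..<t])))
      (concat (map (\<lambda>j. rho s (Plus j (t - j))) (rev [1..<t])))
      ({#s (Root t)#} + Z + mset (map mid (rev [1..<t])))"
    using assms unfolding lo_def mid_def by (intro strand_walk_concat strand_walk_rho_Plus) auto
  then have plus: "strand_walk n ({#s (Root t)#} + Z + mset (map lo [1..<t]))
      (concat (map (\<lambda>j. rho s (Plus j (t - j))) (rev [1..<t])))
      ({#s (Root t)#} + Z + mset (map mid [1..<t]))"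
    by simp
  have minus: "strand_walk n ({#s (Root t)#} + Z + mset (map mid [1..<t]))
      (concat (map (\<lambda>j. rho s (Minus j (t - j))) [1..<t]))
      ({#s (Root t)#} + Z + mset (map hi [1..<t]))"
    using assms unfolding mid_def hi_def by (intro strand_walk_concat strand_walk_rho_Minus) auto
  show ?thesis
    unfolding before after level_word_def
    using strand_walk_append[OF root strand_walk_append[OF plus minus]] by (simp add: ac_simps)
qed

lemma strand_walk_reading_word:
  assumes "n_labelling n k s" "L \<le> k"
  shows "strand_walk n (strand_state s k 0) (concat (map (level_word s) [1..<L + 1]))
                       (strand_state s k L)"
  using assms(2)
proof (induction L)
  case 0
  then show ?case by (simp add: strand_walk.Nil)
next
  case (Suc L)
  have "concat (map (level_word s) [1..<Suc L + 1])
          = concat (map (level_word s) [1..<L + 1]) @ level_word s (Suc L)"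
    by simp
  moreover have "strand_walk n (strand_state s k L) (level_word s (Suc L)) (strand_state s k (Suc L))"
    using strand_walk_level_word[OF assms(1), of "Suc L"] Suc.prems by simp
  ultimately show ?case
    using strand_walk_append Suc by simp
qed

lemma strand_state_0: "strand_state s k 0 = replicate_mset k 0"
proof -
  have "map (strand_height s 0) [1..<k + 1] = map (\<lambda>_. 0) [1..<k + 1]"
    by (intro map_cong) (auto simp: strand_height_def)
  then show ?thesis
    by (simp add: strand_state_def map_replicate_const)
qed

lemma p_acol_omega: "p_acol (omega k s) = concat (map (level_word s) [1..<k + 1])"
  unfolding p_acol_def omega_def by (rule arg_cong[where f = concat]) (auto simp: omega_t_def)

theorem omega_highest_weight:
  assumes "n_labelling n k s" "1 \<le> i" "i \<le> n"
  shows "\<not> e_defined_acol n i (omega k s)"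
proof -
  have "strand_walk n (replicate_mset k 0) (p_acol (omega k s)) (strand_state s k k)"
    using strand_walk_reading_word[OF assms(1) order_refl] by (simp add: p_acol_omega strand_state_0)
  then have "unmatched_minus n i 0 0 (p_acol (omega k s)) = []"
    using assms(2,3) by (rule unmatched_minus_Nil_if_strand_walk) (use assms(2) in auto)
  then show ?thesis
    by (simp add: e_defined_acol_def e_word_def)
qed

theorem corollary5p2:
  fixes n k :: nat and T :: "vtx \<Rightarrow> nat"
  assumes "1 \<le> k" and "T \<in> GT k n"
  shows "\<forall>i\<in>{1..n}. \<not> e_defined_acol n i (omega k T)"
  using assms(2) omega_highest_weight by (auto simp: GT_def)

end
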